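(* Let $n,d\ge1$, $B>0$ and $\epsilon_i>0$. For a voter $i$ with dataset $D_i=\{\langle X_1,Z_1\rangle,\dots,\langle X_n,Z_n\rangle\}$, $X_j,Z_j\in\mathbb{R}^d$, let $\overline{\boldsymbol\beta}_i(D_i)$ be a (deterministically chosen) maximizer of $\mathcal{L}(\boldsymbol\beta,D_i)=\sum_{j=1}^n\ln\Phi(\boldsymbol\beta^\top(X_j-Z_j))$ over $\{\boldsymbol\beta\in\mathbb{R}^d:\|\boldsymbol\beta\|_1\le B\}$, where $\Phi$ is the standard normal CDF. Consider the randomized algorithm (Algorithm 2) that outputs $\overline{\boldsymbol\beta}_i^*(D_i)=\overline{\boldsymbol\beta}_i(D_i)+\boldsymbol R$, where $\boldsymbol R$ has $d$ independent coordinates, each a zero-mean Laplace variable with scale $2B/\epsilon_i$. Then for each voter $i$ this algorithm satisfies $\epsilon_i$-differential privacy both in the voter-level distributed sense (VLDP) and in the record-level distributed sense (RLDP).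
   Context: VLDP: for any two datasets $D_i,D_i'$ of voter $i$, each consisting of $n$ records (arbitrarily different), and any measurable set $\mathcal{Y}$ of outputs, $\Pr[Y_i(D_i)\in\mathcal{Y}]\le e^{\epsilon_i}\Pr[Y_i(D_i')\in\mathcal{Y}]$. RLDP: the same inequality required only for pairs $D_i,D_i'$ of $n$-record datasets differing in exactly one record. The Laplace distribution with scale $\lambda$ has density $\frac{1}{2\lambda}e^{-|x|/\lambda}$. *)

theory Defs
  imports "HOL-Probability.Probability"
begin

type_synonym 'd rec = "(real ^ 'd) \<times> (real ^ 'd)"
type_synonym 'd dataset = "'d rec list"

definition Phi :: "real \<Rightarrow> real" where
  "Phi x = measure (density lborel std_normal_density) {..x}"

definition loglik :: "real ^ 'd \<Rightarrow> 'd dataset \<Rightarrow> real" where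
  "loglik \<beta> D = (\<Sum>j<length D. ln (Phi (\<beta> \<bullet> (fst (D ! j) - snd (D ! j)))))"

definition l1norm :: "real ^ 'd \<Rightarrow> real" where
  "l1norm \<beta> = (\<Sum>i\<in>UNIV. \<bar>\<beta> $ i\<bar>)"

definition laplace_density :: "real \<Rightarrow> real \<Rightarrow> real" where
  "laplace_density s x = exp (- \<bar>x\<bar> / s) / (2 * s)"

definition laplace_measure :: "real \<Rightarrow> real measure" where
  "laplace_measure s = density lborel (\<lambda>x. ennreal (laplace_density s x))"

definition laplace_noise :: "real \<Rightarrow> (real ^ 'd::finite) measure" where
  "laplace_noise s =
     distr (PiM UNIV (\<lambda>_. laplace_measure s)) borel (\<lambda>f. \<chi> i. f i)"

definition alg2 :: "('d dataset \<Rightarrow> real ^ 'd::finite) \<Rightarrow> real \<Rightarrow> real \<Rightarrow> 'd dataset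
                    \<Rightarrow> (real ^ 'd) measure" where
  "alg2 betabar B \<epsilon> D = distr (laplace_noise (2 * B / \<epsilon>)) borel (\<lambda>r. betabar D + r)"

definition VLDP :: "('a list \<Rightarrow> 'b measure) \<Rightarrow> nat \<Rightarrow> real \<Rightarrow> bool" where
  "VLDP M n \<epsilon> \<longleftrightarrow>
     (\<forall>D D' Y. length D = n \<longrightarrow> length D' = n \<longrightarrow> Y \<in> sets (M D) \<longrightarrow>
        measure (M D) Y \<le> exp \<epsilon> * measure (M D') Y)"

definition RLDP :: "('a list \<Rightarrow> 'b measure) \<Rightarrow> nat \<Rightarrow> real \<Rightarrow> bool" where
  "RLDP M n \<epsilon> \<longleftrightarrow>
     (\<forall>D D' Y. length D = n \<longrightarrow> length D' = n \<longrightarrow>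
        card {j. j < n \<and> D ! j \<noteq> D' ! j} = 1 \<longrightarrow> Y \<in> sets (M D) \<longrightarrow>
        measure (M D) Y \<le> exp \<epsilon> * measure (M D') Y)"

end

theory Submission
  imports Defs
begin

text \<open>The outputs of Algorithm 2 on two datasets are the same product Laplace law translated by the
two estimates. Translating the product density by \<open>c\<close> changes it pointwise by a factor of at most
\<open>exp (\<parallel>c\<parallel>\<^sub>1 / s)\<close>, so the probability of any event grows by at most that factor. Both estimates
lie in the \<open>\<ell>\<^sub>1\<close>-ball of radius \<open>B\<close>, so they differ by at most \<open>2B\<close> in \<open>\<ell>\<^sub>1\<close>, and the scale
\<open>s = 2B/\<epsilon>\<close> turns the factor into \<open>e\<^sup>\<epsilon>\<close>. This holds for arbitrary pairs of datasets (VLDP), and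
pairs differing in one record are a special case (RLDP).\<close>

lemma indicator_PiE_UNIV:
  "(indicator (Pi\<^sub>E UNIV A) x :: ennreal) = (\<Prod>i\<in>(UNIV::'i::finite set). indicator (A i) (x i))"
proof (cases "\<forall>i. x i \<in> A i")
  case False
  then obtain j where "x j \<notin> A j" by blast
  then show ?thesis
    using prod_zero[of UNIV "\<lambda>i. indicator (A i) (x i) :: ennreal"]
    by (auto simp: indicator_def PiE_UNIV_domain)
qed (simp add: PiE_UNIV_domain)

lemma PiM_density:
  fixes M :: "'i::finite \<Rightarrow> 'a measure" and g :: "'i \<Rightarrow> 'a \<Rightarrow> ennreal"
  assumes M: "\<And>i. sigma_finite_measure (M i)"
    and g[measurable]: "\<And>i. g i \<in> borel_measurable (M i)"
    and g_finite: "\<And>i. AE x in M i. g i x \<noteq> \<infinity>"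
  shows "PiM UNIV (\<lambda>i. density (M i) (g i)) = density (PiM UNIV M) (\<lambda>x. \<Prod>i\<in>UNIV. g i (x i))"
    (is "_ = ?D")
proof -
  interpret M: product_sigma_finite M
    using M by (simp add: product_sigma_finite_def)
  interpret Mg: product_sigma_finite "\<lambda>i. density (M i) (g i)"
    using g_finite
    by (simp add: product_sigma_finite_def sigma_finite_measure.sigma_finite_iff_density_finite[OF M])
  show ?thesis
  proof (rule Mg.PiM_eqI[symmetric])
    show "sets ?D = sets (PiM UNIV (\<lambda>i. density (M i) (g i)))"
      by (simp cong: sets_PiM_cong)
    fix A assume "\<And>i. i \<in> UNIV \<Longrightarrow> A i \<in> sets (density (M i) (g i))"
    then have A[measurable]: "A i \<in> sets (M i)" for i by simp
    have "emeasure ?D (Pi\<^sub>E UNIV A)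
          = (\<integral>\<^sup>+x. (\<Prod>i\<in>UNIV. g i (x i) * indicator (A i) (x i)) \<partial>PiM UNIV M)"
      by (subst emeasure_density)
         (auto intro!: sets_PiM_I_finite nn_integral_cong simp: indicator_PiE_UNIV prod.distrib)
    also have "\<dots> = (\<Prod>i\<in>UNIV. \<integral>\<^sup>+y. g i y * indicator (A i) y \<partial>M i)"
      by (rule M.product_nn_integral_prod) auto
    also have "\<dots> = (\<Prod>i\<in>UNIV. emeasure (density (M i) (g i)) (A i))"
      by (simp add: emeasure_density)
    finally show "emeasure ?D (Pi\<^sub>E UNIV A) = (\<Prod>i\<in>UNIV. emeasure (density (M i) (g i)) (A i))" .
  qed simp
qed

lemma distr_PiM_lborel_translate:
  fixes c :: "'i::finite \<Rightarrow> 'a::euclidean_space"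
  shows "distr (PiM UNIV (\<lambda>_. lborel)) (PiM UNIV (\<lambda>_. lborel)) (\<lambda>x i. x i + c i)
       = PiM UNIV (\<lambda>_. lborel)"
    (is "distr ?L ?L ?translate = ?L")
proof -
  interpret L: product_sigma_finite "\<lambda>_::'i. lborel :: 'a measure"
    by (simp add: product_sigma_finite_def lborel.sigma_finite_measure_axioms)
  have translate[measurable]: "?translate \<in> ?L \<rightarrow>\<^sub>M ?L"
    by (rule measurable_PiM_single') auto
  have lborel_translate: "emeasure lborel ((\<lambda>y. y + b) -` B) = emeasure lborel B"
    if [measurable]: "B \<in> sets borel" for b :: 'a and B
  proof -
    have "(\<lambda>y. y + b) = (+) b" by (auto simp: add.commute)
    then show ?thesis
      using emeasure_distr[of "(+) b" lborel borel B] by (simp add: lborel_distr_plus)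
  qed
  show ?thesis
  proof (rule L.PiM_eqI)
    fix A :: "'i \<Rightarrow> 'a set" assume "\<And>i. i \<in> UNIV \<Longrightarrow> A i \<in> sets lborel"
    then have A[measurable]: "A i \<in> sets borel" for i by simp
    have "?translate -` Pi\<^sub>E UNIV A \<inter> space ?L = Pi\<^sub>E UNIV (\<lambda>i. (\<lambda>y. y + c i) -` A i)"
      by (auto simp: space_PiM PiE_UNIV_domain)
    then have "emeasure (distr ?L ?L ?translate) (Pi\<^sub>E UNIV A)
          = emeasure ?L (Pi\<^sub>E UNIV (\<lambda>i. (\<lambda>y. y + c i) -` A i))"
      by (subst emeasure_distr) (auto intro!: sets_PiM_I_finite)
    also have "\<dots> = (\<Prod>i\<in>UNIV. emeasure lborel ((\<lambda>y. y + c i) -` A i))"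
      using measurable_sets[of "\<lambda>y. y + c _" borel borel] by (intro L.emeasure_PiM) auto
    finally show "emeasure (distr ?L ?L ?translate) (Pi\<^sub>E UNIV A)
          = (\<Prod>i\<in>UNIV. emeasure lborel (A i))"
      by (simp add: lborel_translate)
  qed simp_all
qed

lemma emeasure_density_le_mult:
  assumes [measurable]: "f \<in> borel_measurable M" "g \<in> borel_measurable M" "A \<in> sets M"
    and le: "AE x in M. f x \<le> K * g x"
  shows "emeasure (density M f) A \<le> K * emeasure (density M g) A"
proof -
  have "emeasure (density M f) A = (\<integral>\<^sup>+x. f x * indicator A x \<partial>M)"
    by (simp add: emeasure_density)
  also have "\<dots> \<le> (\<integral>\<^sup>+x. K * (g x * indicator A x) \<partial>M)"
    using le by (intro nn_integral_mono_AE) (auto simp: mult.assoc split: split_indicator)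
  also have "\<dots> = K * emeasure (density M g) A"
    by (simp add: emeasure_density nn_integral_cmult)
  finally show ?thesis .
qed

lemma laplace_density_pos: "s > 0 \<Longrightarrow> laplace_density s x > 0"
  unfolding laplace_density_def by simp

lemma borel_measurable_laplace_density[measurable]: "laplace_density s \<in> borel_measurable borel"
  unfolding laplace_density_def by measurable

lemma laplace_density_shift_le:
  assumes "s > 0"
  shows "laplace_density s (x - c) \<le> exp (\<bar>c\<bar> / s) * laplace_density s x"
proof -
  have "- \<bar>x - c\<bar> / s \<le> \<bar>c\<bar> / s + - \<bar>x\<bar> / s"
    using assms by (simp add: divide_right_mono field_simps)
  then have "exp (- \<bar>x - c\<bar> / s) \<le> exp (\<bar>c\<bar> / s) * exp (- \<bar>x\<bar> / s)"
    by (simp flip: exp_add)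
  then show ?thesis
    unfolding laplace_density_def using assms by (simp add: divide_right_mono)
qed

lemma laplace_density_eq_exponential:
  assumes "s > 0" "x \<noteq> 0"
  shows "2 * laplace_density s x = exponential_density (1/s) x + exponential_density (1/s) (- x)"
  using assms by (cases "x < 0") (auto simp: laplace_density_def exponential_density_def)

lemma prob_space_laplace_measure:
  assumes "s > 0"
  shows "prob_space (laplace_measure s)"
proof
  let ?e = "exponential_density (1/s)"
  have e: "(\<integral>\<^sup>+x. ennreal (?e x) \<partial>lborel) = 1"
    using prob_space.emeasure_space_1[OF prob_space_exponential_density, of "1/s"] assms
    by (simp add: emeasure_density)
  have e_neg: "(\<integral>\<^sup>+x. ennreal (?e (- x)) \<partial>lborel) = 1"
    using e by (subst lborel_distr_uminus[symmetric]) (simp add: nn_integral_distr)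
  have "2 * (\<integral>\<^sup>+x. ennreal (laplace_density s x) \<partial>lborel)
        = (\<integral>\<^sup>+x. ennreal (2 * laplace_density s x) \<partial>lborel)"
    using assms laplace_density_pos[OF assms]
    by (subst nn_integral_cmult[symmetric]) (auto simp: ennreal_mult less_imp_le)
  also have "\<dots> = (\<integral>\<^sup>+x. ennreal (?e x) + ennreal (?e (- x)) \<partial>lborel)"
    using assms
    by (intro nn_integral_cong_AE eventually_mono[OF AE_lborel_singleton[of 0]])
       (simp add: laplace_density_eq_exponential exponential_density_nonneg flip: ennreal_plus)
  also have "\<dots> = 2"
    by (subst nn_integral_add) (auto simp: e e_neg)
  finally have "(\<integral>\<^sup>+x. ennreal (laplace_density s x) \<partial>lborel) = 1"
    using ennreal_mult_cancel_left[of 2 _ 1] by simp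
  then show "emeasure (laplace_measure s) (space (laplace_measure s)) = 1"
    by (simp add: laplace_measure_def emeasure_density)
qed

lemma sets_laplace_measure[simp, measurable_cong]: "sets (laplace_measure s) = sets borel"
  by (simp add: laplace_measure_def)

lemma space_laplace_measure[simp]: "space (laplace_measure s) = UNIV"
  by (simp add: laplace_measure_def)

lemma PiM_laplace_measure:
  "PiM UNIV (\<lambda>_::'d::finite. laplace_measure s)
   = density (PiM UNIV (\<lambda>_. lborel)) (\<lambda>y. \<Prod>i\<in>UNIV. ennreal (laplace_density s (y i)))"
  unfolding laplace_measure_def
  using PiM_density[of "\<lambda>_::'d. lborel" "\<lambda>_ y. ennreal (laplace_density s y)"]
  by (simp add: lborel.sigma_finite_measure_axioms)

lemma emeasure_PiM_laplace_translate_le: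
  fixes c :: "'d::finite \<Rightarrow> real"
  assumes s: "s > 0" and A[measurable]: "A \<in> sets (PiM UNIV (\<lambda>_::'d. lborel :: real measure))"
  shows "emeasure (PiM UNIV (\<lambda>_. laplace_measure s)) {x. (\<lambda>i. x i + c i) \<in> A}
         \<le> ennreal (exp ((\<Sum>i\<in>UNIV. \<bar>c i\<bar>) / s)) * emeasure (PiM UNIV (\<lambda>_. laplace_measure s)) A"
proof -
  let ?L = "PiM UNIV (\<lambda>_::'d. lborel :: real measure)"
  let ?translate = "\<lambda>x i. x i + c i"
  define G :: "('d \<Rightarrow> real) \<Rightarrow> ('d \<Rightarrow> real) \<Rightarrow> ennreal"
    where "G = (\<lambda>c y. \<Prod>i\<in>UNIV. ennreal (laplace_density s (y i - c i)))"
  have G_measurable[measurable]: "G c \<in> borel_measurable ?L" for c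
    unfolding G_def by measurable
  have translate[measurable]: "?translate \<in> ?L \<rightarrow>\<^sub>M ?L"
    by (rule measurable_PiM_single') auto
  have P: "PiM UNIV (\<lambda>_. laplace_measure s) = density ?L (G (\<lambda>_. 0))"
    by (simp add: PiM_laplace_measure G_def)
  have translated: "distr (density ?L (G (\<lambda>_. 0))) ?L ?translate = density ?L (G c)"
    using density_distr[of "G c" ?L ?translate ?L]
    by (simp add: distr_PiM_lborel_translate G_def comp_def)
  have G_le: "G c y \<le> ennreal (exp ((\<Sum>i\<in>UNIV. \<bar>c i\<bar>) / s)) * G (\<lambda>_. 0) y" for y
  proof -
    have "(\<Prod>i\<in>UNIV. laplace_density s (y i - c i))
          \<le> (\<Prod>i\<in>UNIV. exp (\<bar>c i\<bar> / s) * laplace_density s (y i))"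
      using s by (intro prod_mono) (simp add: laplace_density_shift_le less_imp_le laplace_density_pos)
    also have "\<dots> = exp ((\<Sum>i\<in>UNIV. \<bar>c i\<bar>) / s) * (\<Prod>i\<in>UNIV. laplace_density s (y i))"
      by (simp add: prod.distrib exp_sum sum_divide_distrib)
    moreover have "0 \<le> (\<Prod>i\<in>UNIV. laplace_density s (y i))"
      using s by (simp add: prod_nonneg laplace_density_pos less_imp_le)
    ultimately show ?thesis
      using s unfolding G_def
      by (simp add: prod_ennreal laplace_density_pos less_imp_le ennreal_leI flip: ennreal_mult)
  qed
  have "emeasure (density ?L (G (\<lambda>_. 0))) {x. ?translate x \<in> A}
        = emeasure (distr (density ?L (G (\<lambda>_. 0))) ?L ?translate) A"
    by (subst emeasure_distr) (auto simp: space_PiM vimage_def)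
  also have "\<dots> = emeasure (density ?L (G c)) A"
    by (simp add: translated)
  also have "\<dots> \<le> ennreal (exp ((\<Sum>i\<in>UNIV. \<bar>c i\<bar>) / s)) * emeasure (density ?L (G (\<lambda>_. 0))) A"
    using G_le by (intro emeasure_density_le_mult) auto
  finally show ?thesis
    by (simp add: P)
qed

lemma borel_measurable_vec_lambda:
  "(\<lambda>x. \<chi> i. x i) \<in> borel_measurable (PiM UNIV (\<lambda>_::'d::finite. borel :: real measure))"
proof (subst borel_measurable_euclidean_space, intro ballI)
  fix b :: "real ^ 'd" assume "b \<in> Basis"
  then obtain j where "b = axis j 1" by (auto simp: Basis_vec_def)
  then show "(\<lambda>x. (\<chi> i. x i) \<bullet> b) \<in> borel_measurable (PiM UNIV (\<lambda>_. borel))"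
    by (simp add: inner_axis)
qed

lemma l1norm_diff_le: "l1norm (u - v) \<le> l1norm u + l1norm v"
  unfolding l1norm_def by (simp add: sum_mono abs_triangle_ineq4 flip: sum.distrib)

lemma laplace_mechanism:
  fixes u v :: "real ^ 'd::finite"
  assumes s: "s > 0" and Y[measurable]: "Y \<in> sets borel"
  shows "measure (distr (laplace_noise s) borel ((+) u)) Y
         \<le> exp (l1norm (u - v) / s) * measure (distr (laplace_noise s) borel ((+) v)) Y"
proof -
  let ?P = "PiM UNIV (\<lambda>_::'d. laplace_measure s)"
  have sets_P[measurable_cong]: "sets ?P = sets (PiM UNIV (\<lambda>_::'d. borel :: real measure))"
    by (intro sets_PiM_cong) auto
  have vec_lambda[measurable]: "(\<lambda>x. \<chi> i. x i) \<in> borel_measurable ?P"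
    using borel_measurable_vec_lambda by (simp add: measurable_cong_sets[OF sets_P refl])
  have P: "prob_space ?P"
    using s by (intro prob_space_PiM prob_space_laplace_measure)
  have noise: "distr (laplace_noise s) borel ((+) w) = distr ?P borel (\<lambda>x. w + (\<chi> i. x i))"
    for w :: "real ^ 'd"
    unfolding laplace_noise_def by (subst distr_distr) (auto simp: comp_def)
  have emeasure_noise:
    "emeasure (distr (laplace_noise s) borel ((+) w)) Y = emeasure ?P {x. w + (\<chi> i. x i) \<in> Y}"
    for w :: "real ^ 'd"
    unfolding noise by (subst emeasure_distr) (auto simp: space_PiM vimage_def)
  define A where "A = {x::'d \<Rightarrow> real. v + (\<chi> i. x i) \<in> Y}"
  have "A = (\<lambda>x. v + (\<chi> i. x i)) -` Y \<inter> space ?P"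
    by (auto simp: A_def space_PiM)
  also have "\<dots> \<in> sets ?P"
    by measurable
  finally have A: "A \<in> sets (PiM UNIV (\<lambda>_::'d. lborel :: real measure))"
    by (simp add: sets_P cong: sets_PiM_cong)
  have "{x. (\<lambda>i. x i + (u - v) $ i) \<in> A} = {x. u + (\<chi> i. x i) \<in> Y}"
    by (auto simp: A_def vec_eq_iff elim!: back_subst[of "\<lambda>y. y \<in> Y"])
  then have "emeasure (distr (laplace_noise s) borel ((+) u)) Y
        \<le> ennreal (exp (l1norm (u - v) / s)) * emeasure (distr (laplace_noise s) borel ((+) v)) Y"
    using emeasure_PiM_laplace_translate_le[OF s A, of "\<lambda>i. (u - v) $ i"]
    by (simp add: emeasure_noise A_def l1norm_def)
  moreover have "prob_space (distr (laplace_noise s) borel ((+) w))" for w :: "real ^ 'd"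
    unfolding noise by (intro prob_space.prob_space_distr[OF P]) measurable
  ultimately show ?thesis
    by (simp add: prob_space_def finite_measure.emeasure_eq_measure ennreal_le_iff flip: ennreal_mult)
qed

lemma VLDP_imp_RLDP: "VLDP M n \<epsilon> \<Longrightarrow> RLDP M n \<epsilon>"
  unfolding VLDP_def RLDP_def by blast

lemma VLDP_alg2:
  fixes betabar :: "'d dataset \<Rightarrow> real ^ 'd::finite"
  assumes "B > 0" "\<epsilon> > 0" and bounded: "\<And>D. length D = n \<Longrightarrow> l1norm (betabar D) \<le> B"
  shows "VLDP (alg2 betabar B \<epsilon>) n \<epsilon>"
  unfolding VLDP_def
proof (intro allI impI)
  fix D D' :: "'d dataset" and Y
  assume D: "length D = n" and D': "length D' = n" and Y: "Y \<in> sets (alg2 betabar B \<epsilon> D)"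
  have "l1norm (betabar D - betabar D') / (2 * B / \<epsilon>) \<le> \<epsilon>"
    using l1norm_diff_le[of "betabar D" "betabar D'"] bounded[OF D] bounded[OF D'] assms
    by (simp add: field_simps)
  then have "exp (l1norm (betabar D - betabar D') / (2 * B / \<epsilon>)) * measure (alg2 betabar B \<epsilon> D') Y
             \<le> exp \<epsilon> * measure (alg2 betabar B \<epsilon> D') Y"
    by (intro mult_right_mono) auto
  with Y assms show "measure (alg2 betabar B \<epsilon> D) Y \<le> exp \<epsilon> * measure (alg2 betabar B \<epsilon> D') Y"
    using laplace_mechanism[of "2 * B / \<epsilon>" Y "betabar D" "betabar D'"]
    by (simp add: alg2_def)
qed

theorem theorem3:
  fixes n :: nat and B \<epsilon> :: real
    and betabar :: "'d dataset \<Rightarrow> real ^ 'd::finite"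
  assumes "n \<ge> 1" and "B > 0" and "\<epsilon> > 0"
    and "\<And>D. length D = n \<Longrightarrow> l1norm (betabar D) \<le> B \<and>
            (\<forall>\<beta>. l1norm \<beta> \<le> B \<longrightarrow> loglik \<beta> D \<le> loglik (betabar D) D)"
  shows "VLDP (alg2 betabar B \<epsilon>) n \<epsilon> \<and> RLDP (alg2 betabar B \<epsilon>) n \<epsilon>"
proof -
  have "VLDP (alg2 betabar B \<epsilon>) n \<epsilon>"
    using assms by (intro VLDP_alg2) auto
  then show ?thesis
    using VLDP_imp_RLDP by blast
qed
end
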